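(* Let $G$ be a planar graph and let $D_1=\{v\in V(G):$ for all $A\subseteq V(G)\setminus\{v\}$ with $N(v)\subseteq N[A]$ we have $|A|>3\}$, $R_1=V(G)\setminus N[D_1]$ and $N_{R_1}(v)=N(v)\cap R_1$. For a set $D_2\subseteq V(G)$ let $R=V(G)\setminus N[D_1\cup D_2]$ and $d_R(v)=|N(v)\cap R|$. (1) If $G$ is triangle-free and $D_2=\bigcup_{v\in W}(\{v\}\cup B_v)$, where $B_v=\{z\in V(G)\setminus\{v\}: |N_{R_1}(v)\cap N_{R_1}(z)|\ge 7\}$ and $W=\{v: B_v\neq\emptyset\}$, then $d_R(v)\le 18$ for all $v\in V(G)$. (2) If $G$ has girth at least $5$ and $D_2=\emptyset$, then $d_R(v)\le 3$ for all $v\in V(G)$. (3) If $G$ is outerplanar and $D_2=\emptyset$, then $d_R(v)\le 9$ for all $v\in V(G)$.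
   Context: Graphs are finite, undirected and simple. $N(v)$ is the open neighbourhood of $v$, $N[v]=N(v)\cup\{v\}$, $N[A]=\bigcup_{a\in A}N[a]$. A graph is triangle-free if it has no cycle of length $3$; the girth is the length of a shortest cycle; a graph is outerplanar if it has a plane embedding with all vertices on the outer face. *)

theory Defs
  imports "HOL-Analysis.Analysis"
begin

definition simple_graph :: "'a set \<Rightarrow> 'a set set \<Rightarrow> bool" where
  "simple_graph V E \<longleftrightarrow> finite V \<and>
     (\<forall>e\<in>E. \<exists>u v. u \<in> V \<and> v \<in> V \<and> u \<noteq> v \<and> e = {u, v})"

definition nbhd :: "'a set \<Rightarrow> 'a set set \<Rightarrow> 'a \<Rightarrow> 'a set" where
  "nbhd V E v = {u \<in> V. {u, v} \<in> E}"

definition closed_nbhd_set :: "'a set \<Rightarrow> 'a set set \<Rightarrow> 'a set \<Rightarrow> 'a set" where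
  "closed_nbhd_set V E A = (\<Union>a\<in>A. insert a (nbhd V E a))"

definition has_cycle_of_length :: "'a set \<Rightarrow> 'a set set \<Rightarrow> nat \<Rightarrow> bool" where
  "has_cycle_of_length V E k \<longleftrightarrow> k \<ge> 3 \<and> (\<exists>xs. length xs = k \<and> distinct xs \<and> set xs \<subseteq> V \<and>
      (\<forall>i<k. {xs ! i, xs ! ((i + 1) mod k)} \<in> E))"

definition triangle_free :: "'a set \<Rightarrow> 'a set set \<Rightarrow> bool" where
  "triangle_free V E \<longleftrightarrow> \<not> has_cycle_of_length V E 3"

definition girth_at_least_5 :: "'a set \<Rightarrow> 'a set set \<Rightarrow> bool" where
  "girth_at_least_5 V E \<longleftrightarrow> (\<forall>k<5. \<not> has_cycle_of_length V E k)"

text \<open>Plane drawings: vertices as distinct points of the plane (complex numbers),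
  edges as arcs joining their end points, meeting the vertex points only at their
  ends, and two distinct edges meeting only in common end points.\<close>
definition plane_drawing :: "'a set \<Rightarrow> 'a set set \<Rightarrow> ('a \<Rightarrow> complex) \<Rightarrow> ('a set \<Rightarrow> real \<Rightarrow> complex) \<Rightarrow> bool" where
  "plane_drawing V E p c \<longleftrightarrow> inj_on p V \<and>
     (\<forall>e\<in>E. arc (c e) \<and> {pathstart (c e), pathfinish (c e)} = p ` e \<and>
              path_image (c e) \<inter> p ` V = p ` e) \<and>
     (\<forall>e\<in>E. \<forall>f\<in>E. e \<noteq> f \<longrightarrow> path_image (c e) \<inter> path_image (c f) \<subseteq> p ` (e \<inter> f))"

definition drawing_image :: "'a set \<Rightarrow> 'a set set \<Rightarrow> ('a \<Rightarrow> complex) \<Rightarrow> ('a set \<Rightarrow> real \<Rightarrow> complex) \<Rightarrow> complex set" where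
  "drawing_image V E p c = p ` V \<union> (\<Union>e\<in>E. path_image (c e))"

definition planar :: "'a set \<Rightarrow> 'a set set \<Rightarrow> bool" where
  "planar V E \<longleftrightarrow> (\<exists>p c. plane_drawing V E p c)"

text \<open>Outerplanar: a plane drawing with every vertex on the boundary of the outer
  (unbounded) face.\<close>
definition outerplanar :: "'a set \<Rightarrow> 'a set set \<Rightarrow> bool" where
  "outerplanar V E \<longleftrightarrow> (\<exists>p c. plane_drawing V E p c \<and>
      (\<forall>v\<in>V. p v \<in> closure (outside (drawing_image V E p c))))"

definition D1 :: "'a set \<Rightarrow> 'a set set \<Rightarrow> 'a set" where
  "D1 V E = {v \<in> V. \<forall>A. A \<subseteq> V - {v} \<and> nbhd V E v \<subseteq> closed_nbhd_set V E A \<longrightarrow> card A > 3}"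

definition R1 :: "'a set \<Rightarrow> 'a set set \<Rightarrow> 'a set" where
  "R1 V E = V - closed_nbhd_set V E (D1 V E)"

definition NR1 :: "'a set \<Rightarrow> 'a set set \<Rightarrow> 'a \<Rightarrow> 'a set" where
  "NR1 V E v = nbhd V E v \<inter> R1 V E"

definition Rset :: "'a set \<Rightarrow> 'a set set \<Rightarrow> 'a set \<Rightarrow> 'a set" where
  "Rset V E D2 = V - closed_nbhd_set V E (D1 V E \<union> D2)"

definition dR :: "'a set \<Rightarrow> 'a set set \<Rightarrow> 'a set \<Rightarrow> 'a \<Rightarrow> nat" where
  "dR V E D2 v = card (nbhd V E v \<inter> Rset V E D2)"

definition Bset :: "'a set \<Rightarrow> 'a set set \<Rightarrow> 'a \<Rightarrow> 'a set" where
  "Bset V E v = {z \<in> V - {v}. card (NR1 V E v \<inter> NR1 V E z) \<ge> 7}"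

definition Wset :: "'a set \<Rightarrow> 'a set set \<Rightarrow> 'a set" where
  "Wset V E = {v \<in> V. Bset V E v \<noteq> {}}"

definition D2_tf :: "'a set \<Rightarrow> 'a set set \<Rightarrow> 'a set" where
  "D2_tf V E = (\<Union>v\<in>Wset V E. insert v (Bset V E v))"

end

(*
  A vertex v outside D1 has its neighbourhood dominated by a set A of at most three other
  vertices, so d_R(v) <= 3 * max |N[a] \<inter> N(v) \<inter> R| over a \<in> A, and it suffices to
  bound these local terms.  In a triangle-free graph a neighbour a of v contributes only
  itself; a non-neighbour contributes common R1-neighbours of a and v, fewer than 7 unless
  a \<in> B_v, which would put v into D2.  With girth at least 5 two vertices have at most one
  common neighbour, and none if they are adjacent.  Outerplanar graphs contain no K_{2,3}:
  of three arcs joining two points and meeting only there, one lies, apart from its ends,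
  inside the Jordan curve formed by the other two (compare winding numbers), so its
  interior points cannot be on the boundary of the outer face.
*)
theory Submission
  imports Defs "HOL-Complex_Analysis.Winding_Numbers"
begin

lemma card_le_card_mult_if_covered:
  assumes "finite A" "S \<subseteq> (\<Union>a\<in>A. f a)" "\<And>a. a \<in> A \<Longrightarrow> card (f a \<inter> S) \<le> k"
  shows "card S \<le> card A * k"
proof -
  have "card S = card (\<Union>a\<in>A. f a \<inter> S)"
    using assms(2) by (intro arg_cong[where f = card]) blast
  also have "\<dots> \<le> (\<Sum>a\<in>A. card (f a \<inter> S))"
    using card_UN_le[OF assms(1)] .
  also have "\<dots> \<le> (\<Sum>a\<in>A. k)"
    using assms(3) by (rule sum_mono)
  finally show ?thesis by simp
qed

definition arc_joining :: "(real \<Rightarrow> 'a::topological_space) \<Rightarrow> 'a \<Rightarrow> 'a \<Rightarrow> bool" where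
  "arc_joining g a b \<longleftrightarrow> arc g \<and> pathstart g = a \<and> pathfinish g = b"

lemma closed_path_image_arc_joining: "arc_joining g a b \<Longrightarrow> closed (path_image g)"
  for g :: "real \<Rightarrow> 'a::metric_space"
  by (simp add: arc_joining_def arc_imp_path closed_path_image)

lemma simple_loop_arcs_joining:
  fixes g h :: "real \<Rightarrow> 'a::real_normed_vector"
  assumes "arc_joining g a b" "arc_joining h a b" "path_image g \<inter> path_image h \<subseteq> {a, b}"
  shows "simple_path (g +++ reversepath h)"
    and "pathfinish (g +++ reversepath h) = pathstart (g +++ reversepath h)"
    and "path_image (g +++ reversepath h) = path_image g \<union> path_image h"
  using assms
  by (auto simp: arc_joining_def simple_path_join_loop_eq path_image_join arc_reversepath)

lemma inside_arcs_joining: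
  fixes g h :: "real \<Rightarrow> complex"
  assumes "arc_joining g a b" "arc_joining h a b" "path_image g \<inter> path_image h \<subseteq> {a, b}"
  shows "inside (path_image g \<union> path_image h) \<noteq> {}"
    and "connected (inside (path_image g \<union> path_image h))"
    and "path_image g \<union> path_image h \<subseteq> closure (inside (path_image g \<union> path_image h))"
  using Jordan_inside_outside[OF simple_loop_arcs_joining(1,2)[OF assms]]
  unfolding simple_loop_arcs_joining(3)[OF assms] frontier_def by auto

lemma inside_arcs_joining_iff_winding_number:
  fixes g h :: "real \<Rightarrow> complex"
  assumes "arc_joining g a b" "arc_joining h a b" "path_image g \<inter> path_image h \<subseteq> {a, b}"
    and "z \<notin> path_image g" "z \<notin> path_image h"
  shows "z \<in> inside (path_image g \<union> path_image h) \<longleftrightarrow> winding_number g z \<noteq> winding_number h z"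
proof -
  let ?loop = "g +++ reversepath h"
  note loop = simple_loop_arcs_joining[OF assms(1-3)]
  have "winding_number ?loop z = winding_number g z - winding_number h z"
    using assms by (simp add: arc_joining_def winding_number_join winding_number_reversepath arc_imp_path)
  moreover have "z \<in> inside (path_image ?loop) \<longleftrightarrow> winding_number ?loop z \<noteq> 0"
  proof
    assume "z \<in> inside (path_image ?loop)"
    then show "winding_number ?loop z \<noteq> 0"
      using simple_closed_path_norm_winding_number_inside[OF loop(1)] by fastforce
  next
    assume "winding_number ?loop z \<noteq> 0"
    then have "z \<notin> outside (path_image ?loop)"
      using winding_number_zero_in_outside[OF simple_path_imp_path[OF loop(1)] loop(2)] by blast
    then show "z \<in> inside (path_image ?loop)"
      using assms(4,5) inside_Un_outside[of "path_image ?loop"] loop(3) by blast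
  qed
  ultimately show ?thesis
    using loop(3) by simp
qed

lemma connected_subset_inside:
  fixes S T :: "'a::real_normed_vector set"
  assumes "connected T" "T \<inter> S = {}" "T \<inter> inside S \<noteq> {}"
  shows "T \<subseteq> inside S"
  using inside_outside_intersect_connected[of T S] assms inside_Un_outside[of S] by blast

lemma closure_connected_subset_inside:
  fixes S T :: "'a::real_normed_vector set"
  assumes "closed S" "connected T" "T \<inter> S = {}" "T \<inter> inside S \<noteq> {}"
  shows "closure T - S \<subseteq> inside S"
proof -
  have "closure T \<subseteq> closure (inside S)"
    using closure_mono connected_subset_inside[OF assms(2-4)] .
  also have "\<dots> \<subseteq> S \<union> inside S"
    using closure_inside_subset[OF assms(1)] .
  finally show ?thesis by blast
qed

lemma arc_joining_subset_inside_if_regions_meet: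
  fixes g h k :: "real \<Rightarrow> complex"
  assumes arcs: "arc_joining g a b" "arc_joining h a b" "arc_joining k a b"
    and meet: "path_image g \<inter> path_image h \<subseteq> {a, b}" "path_image g \<inter> path_image k \<subseteq> {a, b}"
    and avoid: "inside (path_image g \<union> path_image h) \<inter> path_image k = {}"
    and z: "z \<in> inside (path_image g \<union> path_image h)" "z \<in> inside (path_image h \<union> path_image k)"
  shows "path_image g - {a, b} \<subseteq> inside (path_image h \<union> path_image k)"
proof -
  let ?I = "inside (path_image g \<union> path_image h)"
  note I = inside_arcs_joining[OF arcs(1,2) meet(1)]
  have "closed (path_image h \<union> path_image k)"
    using arcs(2,3) by (intro closed_Un closed_path_image_arc_joining)
  moreover have "?I \<inter> (path_image h \<union> path_image k) = {}"
    using inside_no_overlap[of "path_image g \<union> path_image h"] avoid by blast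
  ultimately have "closure ?I - (path_image h \<union> path_image k) \<subseteq> inside (path_image h \<union> path_image k)"
    using closure_connected_subset_inside[OF _ I(2)] z by blast
  then show ?thesis
    using I(3) meet by blast
qed

lemma theta_arc_inside:
  fixes g1 g2 g3 :: "real \<Rightarrow> complex"
  assumes arcs: "arc_joining g1 a b" "arc_joining g2 a b" "arc_joining g3 a b"
    and meet: "path_image g1 \<inter> path_image g2 \<subseteq> {a, b}" "path_image g1 \<inter> path_image g3 \<subseteq> {a, b}"
      "path_image g2 \<inter> path_image g3 \<subseteq> {a, b}"
  shows "path_image g1 - {a, b} \<subseteq> inside (path_image g2 \<union> path_image g3)
       \<or> path_image g2 - {a, b} \<subseteq> inside (path_image g1 \<union> path_image g3)
       \<or> path_image g3 - {a, b} \<subseteq> inside (path_image g1 \<union> path_image g2)"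
proof -
  let ?I = "inside (path_image g1 \<union> path_image g2)"
  note I = inside_arcs_joining[OF arcs(1,2) meet(1)]
  have I_disjoint: "?I \<inter> (path_image g1 \<union> path_image g2) = {}"
    using inside_no_overlap by blast
  show ?thesis
  proof (cases "(path_image g3 - {a, b}) \<inter> ?I = {}")
    case False
    have "connected (path_image g3 - {a, b})"
      using connected_simple_path_endless[of g3] arcs(3) by (simp add: arc_joining_def arc_imp_simple_path)
    moreover have "(path_image g3 - {a, b}) \<inter> (path_image g1 \<union> path_image g2) = {}"
      using meet(2,3) by blast
    ultimately have "path_image g3 - {a, b} \<subseteq> ?I"
      using connected_subset_inside False by blast
    then show ?thesis by blast
  next
    case True
    have "a \<in> path_image g1" "b \<in> path_image g1"
      using arcs(1) unfolding arc_joining_def by auto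
    then have I_g3: "?I \<inter> path_image g3 = {}"
      using True I_disjoint by blast
    obtain z where z: "z \<in> ?I"
      using I(1) by blast
    have z_off: "z \<notin> path_image g1" "z \<notin> path_image g2" "z \<notin> path_image g3"
      using z I_disjoint I_g3 by blast+
    have "winding_number g1 z \<noteq> winding_number g2 z"
      using inside_arcs_joining_iff_winding_number[OF arcs(1,2) meet(1) z_off(1,2)] z by blast
    then consider "winding_number g1 z \<noteq> winding_number g3 z"
      | "winding_number g2 z \<noteq> winding_number g3 z"
      by metis
    then show ?thesis
    proof cases
      case 1
      then have "z \<in> inside (path_image g1 \<union> path_image g3)"
        using inside_arcs_joining_iff_winding_number[OF arcs(1,3) meet(2) z_off(1,3)] by blast
      moreover have "?I = inside (path_image g2 \<union> path_image g1)"
        by (simp add: Un_commute)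
      ultimately have "path_image g2 - {a, b} \<subseteq> inside (path_image g1 \<union> path_image g3)"
        using arc_joining_subset_inside_if_regions_meet[OF arcs(2,1,3) _ meet(3)] meet(1) I_g3 z
        by (simp add: Int_commute)
      then show ?thesis by blast
    next
      case 2
      then have "z \<in> inside (path_image g2 \<union> path_image g3)"
        using inside_arcs_joining_iff_winding_number[OF arcs(2,3) meet(3) z_off(2,3)] by blast
      then have "path_image g1 - {a, b} \<subseteq> inside (path_image g2 \<union> path_image g3)"
        using arc_joining_subset_inside_if_regions_meet[OF arcs meet(1,2) I_g3 z] by blast
      then show ?thesis by blast
    qed
  qed
qed

lemma inside_Int_closure_outside:
  fixes K S :: "'a::real_normed_vector set"
  assumes "closed K" "K \<subseteq> S"
  shows "inside K \<inter> closure (outside S) = {}"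
proof -
  have "inside K \<inter> outside S = {}"
    using outside_mono[OF assms(2)] inside_Int_outside[of K] by blast
  then show ?thesis
    using open_Int_closure_eq_empty[OF open_inside[OF assms(1)]] by blast
qed

lemma theta_not_all_on_outer_boundary:
  fixes g1 g2 g3 :: "real \<Rightarrow> complex"
  assumes arcs: "arc_joining g1 a b" "arc_joining g2 a b" "arc_joining g3 a b"
    and meet: "path_image g1 \<inter> path_image g2 \<subseteq> {a, b}" "path_image g1 \<inter> path_image g3 \<subseteq> {a, b}"
      "path_image g2 \<inter> path_image g3 \<subseteq> {a, b}"
    and S: "path_image g1 \<union> path_image g2 \<union> path_image g3 \<subseteq> S"
    and z: "z1 \<in> path_image g1 - {a, b}" "z2 \<in> path_image g2 - {a, b}" "z3 \<in> path_image g3 - {a, b}"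
    and outer: "{z1, z2, z3} \<subseteq> closure (outside S)"
  shows False
proof -
  have "\<not> path_image gi - {a, b} \<subseteq> inside (path_image gj \<union> path_image gk)"
    if "arc_joining gj a b" "arc_joining gk a b" "path_image gj \<union> path_image gk \<subseteq> S"
      "zi \<in> path_image gi - {a, b}" "zi \<in> closure (outside S)"
    for gi gj gk :: "real \<Rightarrow> complex" and zi
    using inside_Int_closure_outside[of "path_image gj \<union> path_image gk" S] that
      closed_path_image_arc_joining[OF that(1)] closed_path_image_arc_joining[OF that(2)]
    by blast
  then show False
    using theta_arc_inside[OF arcs meet] arcs S z outer by (metis insert_subset le_sup_iff)
qed

lemma mem_nbhd_iff: "u \<in> nbhd V E v \<longleftrightarrow> u \<in> V \<and> {u, v} \<in> E"
  by (simp add: nbhd_def)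

lemma nbhd_irrefl: "simple_graph V E \<Longrightarrow> v \<notin> nbhd V E v"
  unfolding simple_graph_def nbhd_def by auto

lemma simple_graph_edge_subset: "simple_graph V E \<Longrightarrow> e \<in> E \<Longrightarrow> e \<subseteq> V"
  unfolding simple_graph_def by auto

lemma finite_nbhd: "simple_graph V E \<Longrightarrow> finite (nbhd V E v)"
  unfolding simple_graph_def nbhd_def by auto

lemma has_cycle_of_length_3I:
  assumes "{a, b, c} \<subseteq> V" "distinct [a, b, c]" "{a, b} \<in> E" "{b, c} \<in> E" "{c, a} \<in> E"
  shows "has_cycle_of_length V E 3"
proof -
  have "{[a, b, c] ! i, [a, b, c] ! ((i + 1) mod 3)} \<in> E" if "i < 3" for i
  proof -
    have "i = 0 \<or> i = 1 \<or> i = 2"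
      using that by linarith
    then show ?thesis
      using assms by (elim disjE) simp_all
  qed
  then show ?thesis
    using assms unfolding has_cycle_of_length_def by (intro conjI exI[of _ "[a, b, c]"]) auto
qed

lemma has_cycle_of_length_4I:
  assumes "{a, b, c, d} \<subseteq> V" "distinct [a, b, c, d]"
    "{a, b} \<in> E" "{b, c} \<in> E" "{c, d} \<in> E" "{d, a} \<in> E"
  shows "has_cycle_of_length V E 4"
proof -
  have "{[a, b, c, d] ! i, [a, b, c, d] ! ((i + 1) mod 4)} \<in> E" if "i < 4" for i
  proof -
    have "i = 0 \<or> i = 1 \<or> i = 2 \<or> i = 3"
      using that by linarith
    then show ?thesis
      using assms by (elim disjE) simp_all
  qed
  then show ?thesis
    using assms unfolding has_cycle_of_length_def by (intro conjI exI[of _ "[a, b, c, d]"]) auto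
qed

lemma triangle_free_adjacent_common_nbhd_empty:
  assumes sg: "simple_graph V E" and "triangle_free V E" "v \<in> V" "a \<in> nbhd V E v"
  shows "nbhd V E a \<inter> nbhd V E v = {}"
proof (rule ccontr)
  assume "nbhd V E a \<inter> nbhd V E v \<noteq> {}"
  then obtain u where "u \<in> nbhd V E a" "u \<in> nbhd V E v"
    by blast
  with assms nbhd_irrefl[OF sg] have "has_cycle_of_length V E 3"
    by (intro has_cycle_of_length_3I[of v a u]) (auto simp: mem_nbhd_iff insert_commute)
  then show False
    using \<open>triangle_free V E\<close> by (simp add: triangle_free_def)
qed

lemma girth_at_least_5_card_common_nbhd_le_1:
  assumes sg: "simple_graph V E" and g5: "girth_at_least_5 V E" and "v \<in> V" "a \<in> V" "a \<noteq> v"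
  shows "card (nbhd V E a \<inter> nbhd V E v) \<le> 1"
proof -
  have "u1 = u2" if "u1 \<in> nbhd V E a \<inter> nbhd V E v" "u2 \<in> nbhd V E a \<inter> nbhd V E v" for u1 u2
  proof (rule ccontr)
    assume "u1 \<noteq> u2"
    with that assms nbhd_irrefl[OF sg] have "has_cycle_of_length V E 4"
      by (intro has_cycle_of_length_4I[of v u1 a u2]) (auto simp: mem_nbhd_iff insert_commute)
    then show False
      using g5 by (simp add: girth_at_least_5_def)
  qed
  then show ?thesis
    using card_le_Suc0_iff_eq[OF finite_Int[OF disjI1[OF finite_nbhd[OF sg]]]] by auto
qed

lemma girth_at_least_5_card_closed_nbhd_Int_nbhd_le_1:
  assumes sg: "simple_graph V E" and g5: "girth_at_least_5 V E" and "v \<in> V" "a \<in> V" "a \<noteq> v"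
  shows "card (insert a (nbhd V E a) \<inter> nbhd V E v) \<le> 1"
proof (cases "a \<in> nbhd V E v")
  case True
  have "triangle_free V E"
    using g5 by (simp add: girth_at_least_5_def triangle_free_def)
  with True have "insert a (nbhd V E a) \<inter> nbhd V E v = {a}"
    using triangle_free_adjacent_common_nbhd_empty[OF sg] \<open>v \<in> V\<close> by blast
  then show ?thesis by simp
next
  case False
  then show ?thesis
    using girth_at_least_5_card_common_nbhd_le_1[OF assms] by simp
qed

lemma plane_drawing_edge_arc_joining:
  assumes "plane_drawing V E p c" "{u, w} \<in> E"
  obtains g where "arc_joining g (p u) (p w)" "path_image g = path_image (c {u, w})"
proof -
  have arc: "arc (c {u, w})" and ends: "{pathstart (c {u, w}), pathfinish (c {u, w})} = {p u, p w}"
    using assms unfolding plane_drawing_def by auto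
  show ?thesis
  proof (cases "pathstart (c {u, w}) = p u")
    case True
    with ends have "pathfinish (c {u, w}) = p w"
      by (auto simp: doubleton_eq_iff)
    with True arc that show ?thesis
      by (simp add: arc_joining_def)
  next
    case False
    with ends have "pathstart (c {u, w}) = p w" "pathfinish (c {u, w}) = p u"
      by (auto simp: doubleton_eq_iff)
    with arc that[of "reversepath (c {u, w})"] show ?thesis
      by (simp add: arc_joining_def arc_reversepath)
  qed
qed

lemma plane_drawing_path2_arc_joining:
  assumes pd: "plane_drawing V E p c" and E: "{w, x} \<in> E" "{w, y} \<in> E" and "x \<noteq> y"
  obtains g where "arc_joining g (p x) (p y)"
    "path_image g = path_image (c {w, x}) \<union> path_image (c {w, y})"
proof -
  obtain g1 where g1: "arc_joining g1 (p x) (p w)" "path_image g1 = path_image (c {w, x})"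
    using plane_drawing_edge_arc_joining[OF pd, of x w] E(1) by (metis insert_commute)
  obtain g2 where g2: "arc_joining g2 (p w) (p y)" "path_image g2 = path_image (c {w, y})"
    using plane_drawing_edge_arc_joining[OF pd E(2)] .
  have "{w, x} \<noteq> {w, y}" "{w, x} \<inter> {w, y} = {w}"
    using \<open>x \<noteq> y\<close> by (auto simp: doubleton_eq_iff)
  then have "path_image g1 \<inter> path_image g2 \<subseteq> {p w}"
    using pd E g1(2) g2(2) unfolding plane_drawing_def by (metis image_empty image_insert)
  then have "arc_joining (g1 +++ g2) (p x) (p y)"
    using g1(1) g2(1) arc_join[of g1 g2] by (simp add: arc_joining_def)
  moreover have "path_image (g1 +++ g2) = path_image (c {w, x}) \<union> path_image (c {w, y})"
    using g1 g2 by (simp add: arc_joining_def path_image_join)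
  ultimately show ?thesis
    using that by blast
qed

lemma plane_drawing_paths2_meet:
  assumes pd: "plane_drawing V E p c"
    and E: "{{w, x}, {w, y}, {w', x}, {w', y}} \<subseteq> E" and "w \<noteq> w'" "w \<notin> {x, y}" "w' \<notin> {x, y}"
  shows "(path_image (c {w, x}) \<union> path_image (c {w, y}))
      \<inter> (path_image (c {w', x}) \<union> path_image (c {w', y})) \<subseteq> {p x, p y}"
proof -
  have "path_image (c e) \<inter> path_image (c f) \<subseteq> {p x, p y}"
    if "e \<in> {{w, x}, {w, y}}" "f \<in> {{w', x}, {w', y}}" for e f
  proof -
    have "e \<in> E" "f \<in> E" "e \<noteq> f" "e \<inter> f \<subseteq> {x, y}"
      using that E assms(3-5) by (auto simp: doubleton_eq_iff)
    then show ?thesis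
      using pd unfolding plane_drawing_def by blast
  qed
  then show ?thesis
    by blast
qed

lemma outerplanar_no_K23:
  assumes sg: "simple_graph V E" and "outerplanar V E" and "x \<noteq> y"
    and w: "{w1, w2, w3} \<subseteq> nbhd V E x \<inter> nbhd V E y" "distinct [w1, w2, w3]"
  shows False
proof -
  obtain p c where pd: "plane_drawing V E p c"
    and outer: "\<forall>v\<in>V. p v \<in> closure (outside (drawing_image V E p c))"
    using \<open>outerplanar V E\<close> unfolding outerplanar_def by blast
  define P where "P w = path_image (c {w, x}) \<union> path_image (c {w, y})" for w
  have common: "w \<in> V" "w \<notin> {x, y}" "{w, x} \<in> E" "{w, y} \<in> E"
    if "w \<in> nbhd V E x \<inter> nbhd V E y" for w
    using that nbhd_irrefl[OF sg] by (auto simp: mem_nbhd_iff insert_commute)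
  have "x \<in> V" "y \<in> V"
    using w(1) common(3,4) simple_graph_edge_subset[OF sg] by blast+
  have arc: "\<exists>g. arc_joining g (p x) (p y) \<and> path_image g = P w"
    if "w \<in> nbhd V E x \<inter> nbhd V E y" for w
    using plane_drawing_path2_arc_joining[OF pd common(3,4)[OF that] \<open>x \<noteq> y\<close>]
    unfolding P_def by metis
  have meet: "P w \<inter> P w' \<subseteq> {p x, p y}"
    if "w \<in> nbhd V E x \<inter> nbhd V E y" "w' \<in> nbhd V E x \<inter> nbhd V E y" "w \<noteq> w'" for w w'
    using plane_drawing_paths2_meet[OF pd _ \<open>w \<noteq> w'\<close>] common[OF that(1)] common[OF that(2)]
    unfolding P_def by blast
  have interior: "p w \<in> P w - {p x, p y}" if "w \<in> nbhd V E x \<inter> nbhd V E y" for w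
  proof -
    have "p ` {w, x} \<subseteq> path_image (c {w, x})"
      using pd common(3)[OF that] unfolding plane_drawing_def by blast
    moreover have "p w \<noteq> p x" "p w \<noteq> p y"
      using pd common(1,2)[OF that] \<open>x \<in> V\<close> \<open>y \<in> V\<close> unfolding plane_drawing_def
      by (auto dest: inj_onD)
    ultimately show ?thesis
      unfolding P_def by blast
  qed
  have drawn: "P w \<subseteq> drawing_image V E p c" if "w \<in> nbhd V E x \<inter> nbhd V E y" for w
    using common(3,4)[OF that] unfolding P_def drawing_image_def by blast
  obtain g1 g2 g3 where g: "arc_joining g1 (p x) (p y)" "arc_joining g2 (p x) (p y)"
      "arc_joining g3 (p x) (p y)" "path_image g1 = P w1" "path_image g2 = P w2" "path_image g3 = P w3"
    using arc w(1) by (metis insert_subset)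
  show False
  proof (rule theta_not_all_on_outer_boundary[OF g(1-3)])
    show "path_image g1 \<inter> path_image g2 \<subseteq> {p x, p y}" "path_image g1 \<inter> path_image g3 \<subseteq> {p x, p y}"
      "path_image g2 \<inter> path_image g3 \<subseteq> {p x, p y}"
      using meet w unfolding g(4-6) by auto
    show "path_image g1 \<union> path_image g2 \<union> path_image g3 \<subseteq> drawing_image V E p c"
      using drawn w(1) unfolding g(4-6) by auto
    show "p w1 \<in> path_image g1 - {p x, p y}" "p w2 \<in> path_image g2 - {p x, p y}"
      "p w3 \<in> path_image g3 - {p x, p y}"
      using interior w(1) unfolding g(4-6) by auto
    show "{p w1, p w2, p w3} \<subseteq> closure (outside (drawing_image V E p c))"
      using outer common(1) w(1) by auto
  qed
qed

lemma outerplanar_card_common_nbhd_le_2: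
  assumes "simple_graph V E" "outerplanar V E" "x \<noteq> y"
  shows "card (nbhd V E x \<inter> nbhd V E y) \<le> 2"
proof (rule ccontr)
  assume "\<not> ?thesis"
  then obtain T where "T \<subseteq> nbhd V E x \<inter> nbhd V E y" "card T = 3"
    using obtain_subset_with_card_n[of 3 "nbhd V E x \<inter> nbhd V E y"] by force
  then obtain w1 w2 w3 where "{w1, w2, w3} \<subseteq> nbhd V E x \<inter> nbhd V E y" "distinct [w1, w2, w3]"
    by (auto simp: card_3_iff)
  then show False
    using outerplanar_no_K23[OF assms] by blast
qed

lemma outerplanar_card_closed_nbhd_Int_nbhd_le_3:
  assumes sg: "simple_graph V E" and "outerplanar V E" and "a \<noteq> v"
  shows "card (insert a (nbhd V E a) \<inter> nbhd V E v) \<le> 3"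
proof -
  have "card (insert a (nbhd V E a) \<inter> nbhd V E v) \<le> card (insert a (nbhd V E a \<inter> nbhd V E v))"
    using finite_nbhd[OF sg] by (intro card_mono) auto
  also have "\<dots> \<le> Suc (card (nbhd V E a \<inter> nbhd V E v))"
    by (simp add: card_insert_le_m1 card_insert_if finite_nbhd[OF sg])
  finally show ?thesis
    using outerplanar_card_common_nbhd_le_2[OF assms] by linarith
qed

lemma not_in_D1E:
  assumes "v \<in> V" "v \<notin> D1 V E"
  obtains A where "A \<subseteq> V - {v}" "nbhd V E v \<subseteq> closed_nbhd_set V E A" "card A \<le> 3"
  using assms unfolding D1_def by (auto simp: not_less)

lemma Rset_subset_R1: "Rset V E D2 \<subseteq> R1 V E"
  unfolding Rset_def R1_def closed_nbhd_set_def by blast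

lemma dR_le_3_mult_local_bound:
  assumes sg: "simple_graph V E" and "v \<in> V"
    and local: "\<And>a. a \<in> V \<Longrightarrow> a \<noteq> v \<Longrightarrow> v \<notin> D1 V E \<union> D2 \<Longrightarrow>
      card (insert a (nbhd V E a) \<inter> nbhd V E v \<inter> Rset V E D2) \<le> k"
  shows "dR V E D2 v \<le> 3 * k"
proof (cases "v \<in> D1 V E \<union> D2")
  case True
  then have "nbhd V E v \<inter> Rset V E D2 = {}"
    unfolding Rset_def closed_nbhd_set_def by blast
  then show ?thesis
    by (simp add: dR_def)
next
  case False
  then obtain A where A: "A \<subseteq> V - {v}" "nbhd V E v \<subseteq> closed_nbhd_set V E A" "card A \<le> 3"
    using not_in_D1E[OF \<open>v \<in> V\<close>] by blast
  have "finite A"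
    using A(1) sg finite_subset unfolding simple_graph_def by blast
  then have "card (nbhd V E v \<inter> Rset V E D2) \<le> card A * k"
    using A(1,2) local False unfolding closed_nbhd_set_def
    by (intro card_le_card_mult_if_covered) (auto simp: Int_assoc)
  also have "\<dots> \<le> 3 * k"
    using A(3) by simp
  finally show ?thesis
    by (simp add: dR_def)
qed

lemma dR_empty_le_3_mult_local_bound:
  assumes sg: "simple_graph V E" and "v \<in> V"
    and local: "\<And>a. a \<in> V \<Longrightarrow> a \<noteq> v \<Longrightarrow> card (insert a (nbhd V E a) \<inter> nbhd V E v) \<le> k"
  shows "dR V E {} v \<le> 3 * k"
proof (rule dR_le_3_mult_local_bound[OF assms(1,2)])
  fix a assume "a \<in> V" "a \<noteq> v"
  have "card (insert a (nbhd V E a) \<inter> nbhd V E v \<inter> Rset V E {})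
      \<le> card (insert a (nbhd V E a) \<inter> nbhd V E v)"
    using finite_nbhd[OF sg] by (intro card_mono) auto
  then show "card (insert a (nbhd V E a) \<inter> nbhd V E v \<inter> Rset V E {}) \<le> k"
    using local[OF \<open>a \<in> V\<close> \<open>a \<noteq> v\<close>] by linarith
qed

lemma triangle_free_card_closed_nbhd_Int_nbhd_Rset_le_6:
  assumes sg: "simple_graph V E" and "triangle_free V E" and "v \<in> V" "a \<in> V" "a \<noteq> v"
    and "v \<notin> D2_tf V E"
  shows "card (insert a (nbhd V E a) \<inter> nbhd V E v \<inter> Rset V E (D2_tf V E)) \<le> 6"
proof (cases "a \<in> nbhd V E v")
  case True
  have "nbhd V E a \<inter> nbhd V E v = {}"
    using triangle_free_adjacent_common_nbhd_empty[OF sg \<open>triangle_free V E\<close> \<open>v \<in> V\<close> True] .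
  then have "insert a (nbhd V E a) \<inter> nbhd V E v \<inter> Rset V E (D2_tf V E) \<subseteq> {a}"
    by blast
  then have "card (insert a (nbhd V E a) \<inter> nbhd V E v \<inter> Rset V E (D2_tf V E)) \<le> card {a}"
    by (rule card_mono[rotated]) simp
  then show ?thesis
    by simp
next
  case False
  then have sub: "insert a (nbhd V E a) \<inter> nbhd V E v \<inter> Rset V E (D2_tf V E)
      \<subseteq> NR1 V E v \<inter> NR1 V E a"
    using Rset_subset_R1[of V E "D2_tf V E"] unfolding NR1_def by blast
  have "\<not> 7 \<le> card (NR1 V E v \<inter> NR1 V E a)"
  proof
    assume "7 \<le> card (NR1 V E v \<inter> NR1 V E a)"
    then have "a \<in> Bset V E v"
      using assms(4,5) unfolding Bset_def by blast
    then have "v \<in> D2_tf V E"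
      using \<open>v \<in> V\<close> unfolding D2_tf_def Wset_def by blast
    with \<open>v \<notin> D2_tf V E\<close> show False ..
  qed
  moreover have "finite (NR1 V E v \<inter> NR1 V E a)"
    using finite_nbhd[OF sg] unfolding NR1_def by blast
  ultimately show ?thesis
    using card_mono[OF _ sub] by linarith
qed

theorem lemma42:
  fixes V :: "'a set" and E :: "'a set set"
  assumes "simple_graph V E" and "planar V E"
  shows "(triangle_free V E \<longrightarrow> (\<forall>v\<in>V. dR V E (D2_tf V E) v \<le> 18))
       \<and> (girth_at_least_5 V E \<longrightarrow> (\<forall>v\<in>V. dR V E {} v \<le> 3))
       \<and> (outerplanar V E \<longrightarrow> (\<forall>v\<in>V. dR V E {} v \<le> 9))"
proof (intro conjI impI ballI)
  fix v assume "triangle_free V E" "v \<in> V"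
  then show "dR V E (D2_tf V E) v \<le> 18"
    using dR_le_3_mult_local_bound[OF assms(1), of v "D2_tf V E" 6]
      triangle_free_card_closed_nbhd_Int_nbhd_Rset_le_6[OF assms(1)] by simp
next
  fix v assume "girth_at_least_5 V E" "v \<in> V"
  then show "dR V E {} v \<le> 3"
    using dR_empty_le_3_mult_local_bound[OF assms(1), of v 1]
      girth_at_least_5_card_closed_nbhd_Int_nbhd_le_1[OF assms(1)] by simp
next
  fix v assume "outerplanar V E" "v \<in> V"
  then show "dR V E {} v \<le> 9"
    using dR_empty_le_3_mult_local_bound[OF assms(1), of v 3]
      outerplanar_card_closed_nbhd_Int_nbhd_le_3[OF assms(1)] by simp
qed

end
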